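(* Assume $\Delta=0$. Let $\lambda_1,\lambda_2,\lambda_3\in K$ with $\lambda_ic_i\in N$ and $s_i':=s_i\nu_i$ where $\nu_i\in N$ corresponds to $\lambda_ic_i$. Then $s_1's_2'$ has order exactly $p$, $s_1's_3'$ has order exactly $q$, and $s_2's_3'$ has order exactly $r$.
   Context: Setting. Let $p,q,r\ge 3$ be integers and $W=W(p,q,r)$ the Coxeter group with generators $s_1,s_2,s_3$ and relations $s_i^2=1$, $(s_1s_2)^p=(s_1s_3)^q=(s_2s_3)^r=1$. Let $\alpha=4\cos^2(\pi k_1/p)$, $\beta=4\cos^2(\pi k_2/q)$, $\gamma=4\cos^2(\pi k_3/r)$ with $\gcd(k_1,p)=\gcd(k_2,q)=\gcd(k_3,r)=1$ (so $0<\alpha,\beta,\gamma<4$), and let $l,m\in\mathbb{C}$ with $lm=\gamma$. Let $K\subset\mathbb{C}$ be a field containing $\alpha,\beta,\gamma,l,m$, and $M$ a $3$-dimensional $K$-vector space with basis $(a_1,a_2,a_3)$. The reflection representation $R:W\to GL(M)$ with parameters $(\alpha,\beta,\gamma;l,m)$ is defined by: for $x=\lambda_1a_1+\lambda_2a_2+\lambda_3a_3$, $R(s_1)x=x-(2\lambda_1-\alpha\lambda_2-\beta\lambda_3)a_1$, $R(s_2)x=x-(-\lambda_1+2\lambda_2-l\lambda_3)a_2$, $R(s_3)x=x-(-\lambda_1-m\lambda_2+2\lambda_3)a_3$. Put $G=R(W)$ and write $s_i$ for $R(s_i)$ (then $s_1s_2,s_1s_3,s_2s_3$ have orders exactly $p,q,r$).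 Let $\Delta=8-2\alpha-2\beta-2\gamma-(\alpha l+\beta m)$; $R$ is reducible iff $\Delta=0$. Reducible setting. Assume $\Delta=0$. Put $b=(4-\gamma)a_1+(l+2)a_2+(m+2)a_3$; then the space of $G$-fixed vectors is $C_M(G)=Kb$ and $(b,a_2,a_3)$ is a basis of $M$. Let $N=N(G)$ be the subgroup of elements of $G$ acting trivially on $M/C_M(G)$. Each $\zeta\in N$ satisfies $\zeta(b)=b$, $\zeta(a_2)=a_2+\lambda b$, $\zeta(a_3)=a_3+\mu b$ for a unique $(\lambda,\mu)\in K^2$; the map $\zeta\mapsto(\lambda,\mu)$ is an injective group homomorphism $N\to (K^2,+)$, through which $N$ is identified with an additive subgroup of $K^2$ (and written additively). Put $c_1=(\alpha,\beta)$, $c_2=(-2,l)$, $c_3=(m,-2)\in K^2$. *)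

theory Defs
  imports "HOL-Analysis.Analysis"
begin

text \<open>The module M = K^3 with basis a1 a2 a3 (we take K = the complex numbers).\<close>

definition a1 :: "complex ^ 3" where "a1 = axis 1 1"
definition a2 :: "complex ^ 3" where "a2 = axis 2 1"
definition a3 :: "complex ^ 3" where "a3 = axis 3 1"

text \<open>Images of the Coxeter generators under the reflection representation
  with parameters (alpha, beta, gamma; l, m).  Coordinates: x = x$1 a1 + x$2 a2 + x$3 a3.\<close>

definition refl1 :: "complex \<Rightarrow> complex \<Rightarrow> complex ^ 3 \<Rightarrow> complex ^ 3" where
  "refl1 \<alpha> \<beta> x = x - (2 * x$1 - \<alpha> * x$2 - \<beta> * x$3) *s a1"

definition refl2 :: "complex \<Rightarrow> complex ^ 3 \<Rightarrow> complex ^ 3" where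
  "refl2 l x = x - (- x$1 + 2 * x$2 - l * x$3) *s a2"

definition refl3 :: "complex \<Rightarrow> complex ^ 3 \<Rightarrow> complex ^ 3" where
  "refl3 m x = x - (- x$1 - m * x$2 + 2 * x$3) *s a3"

text \<open>Since the generators used below are involutions,
  this is the subgroup they generate, i.e. G = R(W).\<close>

inductive_set gen_monoid :: "('a \<Rightarrow> 'a) set \<Rightarrow> ('a \<Rightarrow> 'a) set" for S where
  gen_id: "id \<in> gen_monoid S"
| gen_step: "s \<in> S \<Longrightarrow> g \<in> gen_monoid S \<Longrightarrow> s \<circ> g \<in> gen_monoid S"

definition reflG :: "complex \<Rightarrow> complex \<Rightarrow> complex \<Rightarrow> complex \<Rightarrow> (complex^3 \<Rightarrow> complex^3) set" where
  "reflG \<alpha> \<beta> l m = gen_monoid {refl1 \<alpha> \<beta>, refl2 l, refl3 m}"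

definition fixed_space :: "('a \<Rightarrow> 'a) set \<Rightarrow> 'a set" where
  "fixed_space G = {v. \<forall>g\<in>G. g v = v}"

text \<open>N(G): elements of G acting trivially on M / C_M(G).\<close>
definition Nsub :: "(('a::ab_group_add) \<Rightarrow> 'a) set \<Rightarrow> ('a \<Rightarrow> 'a) set" where
  "Nsub G = {z \<in> G. \<forall>x. z x - x \<in> fixed_space G}"

definition has_order :: "('a \<Rightarrow> 'a) \<Rightarrow> nat \<Rightarrow> bool" where
  "has_order f n \<longleftrightarrow> 0 < n \<and> (f ^^ n) = id \<and> (\<forall>k. 0 < k \<and> k < n \<longrightarrow> (f ^^ k) \<noteq> id)"

end

theory Submission
  imports Defs
begin

(*
  Every element of G is linear and fixes b, because b lies in the kernel of the linear forms
  F1, F2, F3 of the reflections s_i z = z - F_i(z) a_i (this is where Delta = 0 enters).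
  Since (b, a2, a3) is a basis, nu_i is the transvection z |-> z - lam_i F_i(z) b, and
  s_i nu_i is again a reflection z |-> z - F_i(z) (a_i + lam_i b) whose roots pair with the
  forms exactly as before.

  It remains to show that two reflections with forms F, H and roots u, v satisfying
  F u = H v = 2, F v = -x, H u = -y, x y = 4 cos^2(pi k/n) have a product rot of order n.
  Write x y = 2 + w + 1/w with w a primitive n-th root of unity. Then rot has eigenvectors for
  the eigenvalues w and 1/w spanning span {u, v}, and z - rot z lies in span {u, v}; hence the
  telescoping sum z - rot^j z = sum_{i<j} rot^i (z - rot z) vanishes as soon as w^j = 1,
  while conversely rot^j = id forces w^j = 1.
*)

definition refl_along :: "('a::ring ^ 'n \<Rightarrow> 'a) \<Rightarrow> 'a ^ 'n \<Rightarrow> 'a ^ 'n \<Rightarrow> 'a ^ 'n" where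
  "refl_along F u z = z - F z *s u"

lemma linear_refl_along:
  fixes F :: "'a::field ^ 'n \<Rightarrow> 'a"
  assumes "Vector_Spaces.linear (*s) (*) F"
  shows "Vector_Spaces.linear (*s) (*s) (refl_along F u)"
  using assms unfolding Vector_Spaces.linear_iff refl_along_def
  by (auto simp: vec_eq_iff algebra_simps vec.vector_space_axioms)

locale reflection_pair =
  fixes F H :: "'a::field ^ 'n \<Rightarrow> 'a" and u v :: "'a ^ 'n" and x y \<omega> :: 'a
  assumes F_linear: "Vector_Spaces.linear (*s) (*) F"
    and H_linear: "Vector_Spaces.linear (*s) (*) H"
    and F_u: "F u = 2" and F_v: "F v = - x" and H_u: "H u = - y" and H_v: "H v = 2"
    and xy: "x * y = 2 + \<omega> + inverse \<omega>"
    and \<omega>_nonzero: "\<omega> \<noteq> 0" and \<omega>_ne_1: "\<omega> \<noteq> 1" and \<omega>_ne_minus_1: "\<omega> \<noteq> -1"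
begin

sublocale F: Vector_Spaces.linear "(*s)" "(*)" F by (rule F_linear)
sublocale H: Vector_Spaces.linear "(*s)" "(*)" H by (rule H_linear)

definition rot :: "'a ^ 'n \<Rightarrow> 'a ^ 'n" where
  "rot = refl_along F u \<circ> refl_along H v"

lemma rot_apply: "rot z = z - (F z + x * H z) *s u - H z *s v"
  by (simp add: rot_def refl_along_def F.diff F.scale F_v algebra_simps)

lemma linear_rot: "Vector_Spaces.linear (*s) (*s) rot"
  unfolding rot_def
  by (rule Vector_Spaces.linear_compose[of _ "(*s)"]) (intro linear_refl_along F_linear H_linear)+

lemma linear_rot_pow: "Vector_Spaces.linear (*s) (*s) (rot ^^ j)"
proof (induction j)
  case 0 show ?case by (simp add: vec.linear_ident)
next
  case (Suc j) show ?case
    unfolding funpow.simps(2) by (rule Vector_Spaces.linear_compose[OF Suc linear_rot])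
qed

definition eigvec :: "'a \<Rightarrow> 'a ^ 'n" where
  "eigvec \<mu> = (1 + \<mu>) *s u + y *s v"

lemma H_eigvec: "H (eigvec \<mu>) = y * (1 - \<mu>)"
  by (simp add: eigvec_def H.add H.scale H_u H_v algebra_simps)

lemma rot_pow_eigvec:
  assumes "\<mu> * \<mu> + 1 = (x * y - 2) * \<mu>"
  shows "(rot ^^ j) (eigvec \<mu>) = \<mu> ^ j *s eigvec \<mu>"
proof (induction j)
  case 0 show ?case by simp
next
  case (Suc j)
  have "F (eigvec \<mu>) + x * H (eigvec \<mu>) = 2 + 2 * \<mu> - x * y * \<mu>"
    unfolding H_eigvec by (simp add: eigvec_def F.add F.scale F_u F_v algebra_simps)
  also have "\<dots> = (1 + \<mu>) * (1 - \<mu>)"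
    using assms by (simp add: algebra_simps)
  finally have "rot (eigvec \<mu>) = \<mu> *s eigvec \<mu>"
    by (simp add: rot_apply H_eigvec) (simp add: eigvec_def vec_eq_iff algebra_simps)
  with Suc show ?case by (simp add: vec.linear_scale[OF linear_rot])
qed

lemma char_poly_root:
  assumes "\<mu> = \<omega> \<or> \<mu> = inverse \<omega>"
  shows "\<mu> * \<mu> + 1 = (x * y - 2) * \<mu>"
  using assms \<omega>_nonzero by (auto simp: xy field_simps)

lemma y_nonzero: "y \<noteq> 0"
proof
  assume "y = 0"
  then have "(\<omega> + 1)^2 = 0"
    using xy \<omega>_nonzero by (simp add: field_simps power2_eq_square)
  with \<omega>_ne_minus_1 show False
    by (simp add: add_eq_0_iff2)
qed

lemma eigvec_\<omega>_nonzero: "eigvec \<omega> \<noteq> 0"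
  using H_eigvec[of \<omega>] y_nonzero \<omega>_ne_1 by auto

lemma \<omega>_minus_inverse_nonzero: "\<omega> - inverse \<omega> \<noteq> 0"
  using \<omega>_nonzero \<omega>_ne_1 \<omega>_ne_minus_1 by (auto simp: field_simps square_eq_1_iff)

lemma u_v_from_eigvecs:
  "(\<omega> - inverse \<omega>) *s u = eigvec \<omega> - eigvec (inverse \<omega>)"
  "y *s v = eigvec \<omega> - (1 + \<omega>) *s u"
  by (simp_all add: eigvec_def vec_eq_iff algebra_simps)

definition orbit_sum :: "nat \<Rightarrow> 'a ^ 'n \<Rightarrow> 'a ^ 'n" where
  "orbit_sum j w = (\<Sum>i<j. (rot ^^ i) w)"

lemma linear_orbit_sum: "Vector_Spaces.linear (*s) (*s) (orbit_sum j)"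
  unfolding orbit_sum_def by (rule vec.linear_compose_sum) (simp add: linear_rot_pow)

lemma orbit_sum_eigvec:
  assumes "\<mu> = \<omega> \<or> \<mu> = inverse \<omega>" and "\<omega> ^ j = 1"
  shows "orbit_sum j (eigvec \<mu>) = 0"
proof -
  have "\<mu> ^ j = 1" "\<mu> \<noteq> 1"
    using assms \<omega>_ne_1 by (auto simp: power_inverse)
  then have "(\<Sum>i<j. \<mu> ^ i) = 0"
    by (simp add: sum_gp_strict)
  then show ?thesis
    by (simp add: orbit_sum_def rot_pow_eigvec[OF char_poly_root[OF assms(1)]] vec.scale_sum_left[symmetric])
qed

lemma orbit_sum_u_v:
  assumes "\<omega> ^ j = 1"
  shows "orbit_sum j u = 0" and "orbit_sum j v = 0"
proof -
  interpret S: Vector_Spaces.linear "(*s)" "(*s)" "orbit_sum j" by (rule linear_orbit_sum)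
  have "(\<omega> - inverse \<omega>) *s orbit_sum j u = orbit_sum j (eigvec \<omega>) - orbit_sum j (eigvec (inverse \<omega>))"
    by (simp only: S.scale[symmetric] u_v_from_eigvecs S.diff)
  then show u: "orbit_sum j u = 0"
    using \<omega>_minus_inverse_nonzero by (simp add: orbit_sum_eigvec assms)
  have "y *s orbit_sum j v = orbit_sum j (eigvec \<omega>) - (1 + \<omega>) *s orbit_sum j u"
    by (simp only: S.scale[symmetric] u_v_from_eigvecs S.diff)
  then show "orbit_sum j v = 0"
    using y_nonzero by (simp add: orbit_sum_eigvec assms u)
qed

lemma rot_pow_eq_id_if:
  assumes "\<omega> ^ j = 1"
  shows "rot ^^ j = id"
proof
  fix z
  interpret S: Vector_Spaces.linear "(*s)" "(*s)" "orbit_sum j" by (rule linear_orbit_sum)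
  have "(rot ^^ i) (z - rot z) = (rot ^^ i) z - (rot ^^ Suc i) z" for i
    by (simp add: vec.linear_diff[OF linear_rot_pow] funpow_swap1)
  then have "z - (rot ^^ j) z = orbit_sum j (z - rot z)"
    using sum_lessThan_telescope'[of "\<lambda>i. (rot ^^ i) z" j] by (simp add: orbit_sum_def)
  also have "\<dots> = 0"
    by (simp add: rot_apply S.add S.scale orbit_sum_u_v[OF assms])
  finally show "(rot ^^ j) z = id z" by simp
qed

lemma rot_pow_eq_id_iff: "rot ^^ j = id \<longleftrightarrow> \<omega> ^ j = 1"
proof
  assume "rot ^^ j = id"
  then have "\<omega> ^ j *s eigvec \<omega> = 1 *s eigvec \<omega>"
    using rot_pow_eigvec[OF char_poly_root, of \<omega> j] by simp
  then show "\<omega> ^ j = 1"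
    using eigvec_\<omega>_nonzero by (metis vec.scale_cancel_right)
qed (rule rot_pow_eq_id_if)

end

lemma root_unity_pow_eq_1_iff:
  fixes n k j :: nat
  assumes "n \<noteq> 0" and "coprime k n"
  shows "exp (2 * of_real pi * \<i> * of_nat k / of_nat n) ^ j = 1 \<longleftrightarrow> n dvd j"
proof -
  have "exp (2 * of_real pi * \<i> * of_nat k / of_nat n) ^ j
      = exp (2 * of_real pi * \<i> * of_nat (j * k) / of_nat n)"
    by (simp flip: exp_of_nat_mult add: field_simps)
  also have "\<dots> = 1 \<longleftrightarrow> n dvd j * k"
    using assms(1) complex_root_unity_eq_1[of n "j * k"] by (simp del: of_nat_mult)
  also have "\<dots> \<longleftrightarrow> n dvd j"
    using assms(2) by (simp add: coprime_commute coprime_dvd_mult_left_iff)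
  finally show ?thesis .
qed

lemma four_cos_sq_eq:
  fixes n k :: nat
  defines "\<omega> \<equiv> exp (2 * of_real pi * \<i> * of_nat k / of_nat n)"
  shows "complex_of_real (4 * (cos (pi * real k / real n))^2) = 2 + \<omega> + inverse \<omega>"
proof -
  define \<theta> where "\<theta> = pi * real k / real n"
  have "4 * (cos \<theta>)^2 = 2 + 2 * cos (2 * \<theta>)"
    by (simp add: cos_double_cos)
  then have "complex_of_real (4 * (cos \<theta>)^2) = 2 + 2 * cos (complex_of_real (2 * \<theta>))"
    by (simp flip: cos_of_real)
  also have "\<dots> = 2 + \<omega> + inverse \<omega>"
    by (simp add: cos_exp_eq exp_minus \<omega>_def \<theta>_def field_simps)
  finally show ?thesis by (simp add: \<theta>_def)
qed

lemma primitive_root_unity_ne: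
  fixes n k :: nat
  defines "\<omega> \<equiv> exp (2 * of_real pi * \<i> * of_nat k / of_nat n)"
  assumes "n \<ge> 3" and "coprime k n"
  shows "\<omega> \<noteq> 0" and "\<omega> \<noteq> 1" and "\<omega> \<noteq> -1"
proof -
  have pow: "\<omega> ^ j = 1 \<longleftrightarrow> n dvd j" for j
    unfolding \<omega>_def using assms by (intro root_unity_pow_eq_1_iff) auto
  show "\<omega> \<noteq> 0" by (simp add: \<omega>_def)
  show "\<omega> \<noteq> 1" using pow[of 1] assms(2) by auto
  show "\<omega> \<noteq> -1" using pow[of 2] assms(2) by (auto dest: dvd_imp_le)
qed

lemma four_cos_sq_ne_4:
  fixes n k :: nat
  assumes "n \<ge> 3" and "coprime k n"
  shows "complex_of_real (4 * (cos (pi * real k / real n))^2) \<noteq> 4"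
proof
  define \<omega> where "\<omega> = exp (2 * of_real pi * \<i> * of_nat k / of_nat n)"
  note \<omega>_ne = primitive_root_unity_ne[OF assms, folded \<omega>_def]
  assume "complex_of_real (4 * (cos (pi * real k / real n))^2) = 4"
  then have "2 + \<omega> + inverse \<omega> = 4"
    unfolding four_cos_sq_eq \<omega>_def .
  then have "(\<omega> - 1)^2 = 0"
    using \<omega>_ne(1) by (simp add: field_simps power2_eq_square)
  with \<omega>_ne(2) show False by simp
qed

theorem reflection_pair_has_order:
  fixes F H :: "complex ^ 'n \<Rightarrow> complex" and n k :: nat
  assumes "Vector_Spaces.linear (*s) (*) F" and "Vector_Spaces.linear (*s) (*) H"
    and "F u = 2" and "F v = - x" and "H u = - y" and "H v = 2"
    and "x * y = complex_of_real (4 * (cos (pi * real k / real n))^2)"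
    and "n \<ge> 3" and "coprime k n"
  shows "has_order (refl_along F u \<circ> refl_along H v) n"
proof -
  define \<omega> where "\<omega> = exp (2 * of_real pi * \<i> * of_nat k / of_nat n)"
  note \<omega>_ne = primitive_root_unity_ne[OF assms(8,9), folded \<omega>_def]
  interpret reflection_pair F H u v x y \<omega>
    using assms \<omega>_ne unfolding reflection_pair_def four_cos_sq_eq \<omega>_def by simp
  have "\<omega> ^ j = 1 \<longleftrightarrow> n dvd j" for j
    unfolding \<omega>_def using assms(8,9) by (intro root_unity_pow_eq_1_iff) auto
  then show ?thesis
    using assms(8) by (auto simp: has_order_def rot_pow_eq_id_iff simp flip: rot_def dest: dvd_imp_le)
qed

definition coord_form :: "'a::comm_ring_1 \<Rightarrow> 'a \<Rightarrow> 'a \<Rightarrow> 'a ^ 3 \<Rightarrow> 'a" where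
  "coord_form c1 c2 c3 z = c1 * z$1 + c2 * z$2 + c3 * z$3"

lemma linear_coord_form: "Vector_Spaces.linear (*s) (*) (coord_form c1 c2 c3 :: 'a::field ^ 3 \<Rightarrow> 'a)"
  unfolding Vector_Spaces.linear_iff coord_form_def
  by (simp add: algebra_simps vec.vector_space_axioms vector_space_over_itself.vector_space_axioms)

lemma coord_form_add_scale:
  "coord_form c1 c2 c3 (z + t *s w) = coord_form c1 c2 c3 z + t * coord_form c1 c2 c3 w"
  by (simp add: coord_form_def algebra_simps)

lemma coord_form_basis [simp]:
  "coord_form c1 c2 c3 a1 = c1" "coord_form c1 c2 c3 a2 = c2" "coord_form c1 c2 c3 a3 = c3"
  by (simp_all add: coord_form_def a1_def a2_def a3_def axis_def)

lemma refl_eq_refl_along: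
  "refl1 \<alpha> \<beta> = refl_along (coord_form 2 (-\<alpha>) (-\<beta>)) a1"
  "refl2 l = refl_along (coord_form (-1) 2 (-l)) a2"
  "refl3 m = refl_along (coord_form (-1) (-m) 2) a3"
  by (simp_all add: fun_eq_iff refl1_def refl2_def refl3_def refl_along_def coord_form_def)

lemma reflG_linear_fixing:
  assumes "g \<in> reflG \<alpha> \<beta> l m"
    and "coord_form 2 (-\<alpha>) (-\<beta>) b = 0" "coord_form (-1) 2 (-l) b = 0" "coord_form (-1) (-m) 2 b = 0"
  shows "Vector_Spaces.linear (*s) (*s) g \<and> g b = b"
  using assms(1) unfolding reflG_def
proof (induction rule: gen_monoid.induct)
  case gen_id
  show ?case by (simp add: vec.linear_ident)
next
  case (gen_step s g)
  then have "Vector_Spaces.linear (*s) (*s) s \<and> s b = b"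
    using assms(2-4) by (auto simp: refl_eq_refl_along refl_along_def intro: linear_refl_along linear_coord_form)
  with gen_step.IH show ?case
    by (simp add: Vector_Spaces.linear_compose[of "(*s)" "(*s)" g "(*s)" s, unfolded o_def])
qed

lemma linear_eq_on_b_a2_a3:
  fixes g h :: "complex ^ 3 \<Rightarrow> complex ^ 3"
  assumes "Vector_Spaces.linear (*s) (*s) g" and "Vector_Spaces.linear (*s) (*s) h"
    and "b $ 1 \<noteq> 0" and "g b = h b" and "g a2 = h a2" and "g a3 = h a3"
  shows "g = h"
proof
  fix z
  have "z = (z$1 / b$1) *s b + (z$2 - z$1 * b$2 / b$1) *s a2 + (z$3 - z$1 * b$3 / b$1) *s a3"
    using assms(3) by (simp add: vec_eq_iff forall_3 a2_def a3_def axis_def field_simps)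
  then have "z \<in> vec.span {b, a2, a3}"
    by (metis vec.span_add vec.span_scale vec.span_base insertI1 insertI2)
  with assms show "g z = h z"
    by (intro vec.linear_eq_on[of g h z "{b, a2, a3}"]) auto
qed

lemma refl_along_comp_transvection:
  assumes "Vector_Spaces.linear (*s) (*) F" and "F b = 0"
  shows "refl_along F a \<circ> refl_along (\<lambda>z. t * F z) b = refl_along F (a + t *s b)"
proof -
  interpret F: Vector_Spaces.linear "(*s)" "(*)" F by fact
  show ?thesis
    using assms(2) by (simp add: fun_eq_iff refl_along_def F.diff F.scale vec_eq_iff algebra_simps)
qed

lemma refl_along_comp_shifts_root:
  fixes \<nu> :: "complex ^ 3 \<Rightarrow> complex ^ 3"
  assumes "Vector_Spaces.linear (*s) (*s) \<nu>" and "\<nu> b = b"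
    and "Vector_Spaces.linear (*s) (*) F" and "F b = 0" and "b $ 1 \<noteq> 0"
    and "\<nu> a2 = a2 - (t * F a2) *s b" and "\<nu> a3 = a3 - (t * F a3) *s b"
  shows "refl_along F a \<circ> \<nu> = refl_along F (a + t *s b)"
proof -
  have "Vector_Spaces.linear (*s) (*s) (refl_along (\<lambda>z. t * F z) b)"
    using assms(3) by (intro linear_refl_along) (simp add: Vector_Spaces.linear_iff algebra_simps)
  then have "\<nu> = refl_along (\<lambda>z. t * F z) b"
    using assms by (intro linear_eq_on_b_a2_a3[where b = b]) (simp_all add: refl_along_def)
  then show ?thesis
    using refl_along_comp_transvection[OF assms(3,4)] by simp
qed

lemma cartan_forms_at_b:
  assumes "l * m = \<gamma>" and "8 - 2*\<alpha> - 2*\<beta> - 2*\<gamma> - (\<alpha> * l + \<beta> * m) = 0"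
    and "b = (4 - \<gamma>) *s a1 + (l + 2) *s a2 + (m + 2) *s a3"
  shows "coord_form 2 (-\<alpha>) (-\<beta>) b = 0" "coord_form (-1) 2 (-l) b = 0" "coord_form (-1) (-m) 2 b = 0"
    and "b $ 1 = 4 - \<gamma>"
  using assms(1,2) unfolding assms(3)
  by (simp_all add: coord_form_def a1_def a2_def a3_def axis_def algebra_simps)

theorem corollary1:
  fixes p q r k1 k2 k3 :: nat
    and \<alpha> \<beta> \<gamma> l m :: complex
    and lam1 lam2 lam3 :: complex
    and \<nu>1 \<nu>2 \<nu>3 :: "complex^3 \<Rightarrow> complex^3"
    and b :: "complex^3" and G :: "(complex^3 \<Rightarrow> complex^3) set"
  assumes "p \<ge> 3" "q \<ge> 3" "r \<ge> 3"
    and "coprime k1 p" "coprime k2 q" "coprime k3 r"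
    and "\<alpha> = complex_of_real (4 * (cos (pi * real k1 / real p))^2)"
    and "\<beta> = complex_of_real (4 * (cos (pi * real k2 / real q))^2)"
    and "\<gamma> = complex_of_real (4 * (cos (pi * real k3 / real r))^2)"
    and "l * m = \<gamma>"
    and Delta0: "8 - 2*\<alpha> - 2*\<beta> - 2*\<gamma> - (\<alpha> * l + \<beta> * m) = 0"
    and "b = (4 - \<gamma>) *s a1 + (l + 2) *s a2 + (m + 2) *s a3"
    and "G = reflG \<alpha> \<beta> l m"
    and nu1: "\<nu>1 \<in> Nsub G" "\<nu>1 a2 = a2 + (lam1 * \<alpha>) *s b" "\<nu>1 a3 = a3 + (lam1 * \<beta>) *s b"
    and nu2: "\<nu>2 \<in> Nsub G" "\<nu>2 a2 = a2 + (lam2 * (-2)) *s b" "\<nu>2 a3 = a3 + (lam2 * l) *s b"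
    and nu3: "\<nu>3 \<in> Nsub G" "\<nu>3 a2 = a2 + (lam3 * m) *s b" "\<nu>3 a3 = a3 + (lam3 * (-2)) *s b"
  shows "has_order ((refl1 \<alpha> \<beta> \<circ> \<nu>1) \<circ> (refl2 l \<circ> \<nu>2)) p \<and>
         has_order ((refl1 \<alpha> \<beta> \<circ> \<nu>1) \<circ> (refl3 m \<circ> \<nu>3)) q \<and>
         has_order ((refl2 l \<circ> \<nu>2) \<circ> (refl3 m \<circ> \<nu>3)) r"
proof -
  define F1 F2 F3 where "F1 = coord_form 2 (-\<alpha>) (-\<beta>)"
    and "F2 = coord_form (-1) 2 (-l)" and "F3 = coord_form (-1) (-m) 2"
  note F_linear = linear_coord_form[where 'a = complex]
  note F_b = cartan_forms_at_b[OF assms(10-12)]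
  have "b $ 1 \<noteq> 0"
    using four_cos_sq_ne_4[OF assms(3,6)] assms(9) F_b(4) by simp
  have \<nu>: "Vector_Spaces.linear (*s) (*s) \<nu> \<and> \<nu> b = b" if "\<nu> \<in> Nsub G" for \<nu>
    using that F_b assms(13) by (intro reflG_linear_fixing) (auto simp: Nsub_def)
  have twisted: "refl1 \<alpha> \<beta> \<circ> \<nu>1 = refl_along F1 (a1 + lam1 *s b)"
    "refl2 l \<circ> \<nu>2 = refl_along F2 (a2 + lam2 *s b)"
    "refl3 m \<circ> \<nu>3 = refl_along F3 (a3 + lam3 *s b)"
    using \<nu>[OF nu1(1)] \<nu>[OF nu2(1)] \<nu>[OF nu3(1)] nu1 nu2 nu3 F_b \<open>b $ 1 \<noteq> 0\<close>
    unfolding F1_def F2_def F3_def refl_eq_refl_along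
    by (auto intro!: refl_along_comp_shifts_root F_linear)
  have shift: "F1 (z + t *s b) = F1 z" "F2 (z + t *s b) = F2 z" "F3 (z + t *s b) = F3 z" for z t
    using F_b by (simp_all add: F1_def F2_def F3_def coord_form_add_scale)
  have "has_order (refl_along F1 (a1 + lam1 *s b) \<circ> refl_along F2 (a2 + lam2 *s b)) p"
    using assms(1,4,7) shift unfolding F1_def F2_def
    by (intro reflection_pair_has_order[where x = \<alpha> and y = 1] F_linear) simp_all
  moreover have "has_order (refl_along F1 (a1 + lam1 *s b) \<circ> refl_along F3 (a3 + lam3 *s b)) q"
    using assms(2,5,8) shift unfolding F1_def F3_def
    by (intro reflection_pair_has_order[where x = \<beta> and y = 1] F_linear) simp_all
  moreover have "has_order (refl_along F2 (a2 + lam2 *s b) \<circ> refl_along F3 (a3 + lam3 *s b)) r"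
    using assms(3,6,9,10) shift unfolding F2_def F3_def
    by (intro reflection_pair_has_order[where x = l and y = m] F_linear) simp_all
  ultimately show ?thesis
    unfolding twisted by simp
qed

end
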